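(* Let $\delta>0$, $q=\frac rs\in[0,1)\cap\mathbb{Q}$, and $f(x)=\log(\{x-q\})$. Let $\alpha=[0;a_1,a_2,\dots]$ be irrational, let $K\in\mathbb{N}$ with $q_{K-1}\equiv0\pmod s$, and let $N\in\mathbb{N}$ with $q_{K-1}<N<q_K$ whose Ostrowski digit $b_{K-1}=b_{K-1}(N)$ satisfies $\delta a_K<b_{K-1}<\frac{a_K}{4}$. Then, if $a_K$ is sufficiently large, $$(-1)^KS_{b_{K-1}q_{K-1}}(f,\alpha)\gg\delta\,a_K\log(q_{K-1}),$$ with an absolute implied constant.
   Context: $\{x\}$ is the fractional part; $q_0=1,q_1=a_1,q_{k+1}=a_{k+1}q_k+q_{k-1}$. $S_M(f,\alpha):=\sum_{n=1}^M f(n\alpha)-M\int_0^1f(x)\,dx$. The Ostrowski expansion of $N$ is the unique representation $N=\sum_{\ell=0}^{K-1}b_\ell q_\ell$ with $b_{K-1}\ne0$, $0\le b_0<a_1$, $0\le b_\ell\le a_{\ell+1}$, and $b_{\ell-1}=0$ whenever $b_\ell=a_{\ell+1}$. *)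

theory Defs
  imports "HOL-Analysis.Analysis"
begin

fun cf_rem :: "real \<Rightarrow> nat \<Rightarrow> real" where
  "cf_rem x 0 = x"
| "cf_rem x (Suc k) = 1 / frac (cf_rem x k)"

definition cf_a :: "real \<Rightarrow> nat \<Rightarrow> nat" where
  "cf_a x k = nat \<lfloor>cf_rem x k\<rfloor>"

fun cf_q :: "real \<Rightarrow> nat \<Rightarrow> nat" where
  "cf_q x 0 = 1"
| "cf_q x (Suc 0) = cf_a x 1"
| "cf_q x (Suc (Suc k)) = cf_a x (Suc (Suc k)) * cf_q x (Suc k) + cf_q x k"

definition is_ostrowski :: "real \<Rightarrow> nat \<Rightarrow> (nat \<Rightarrow> nat) \<Rightarrow> nat \<Rightarrow> bool" where
  "is_ostrowski x K b N \<longleftrightarrow>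
     1 \<le> K \<and> N = (\<Sum>l<K. b l * cf_q x l) \<and> b (K - 1) \<noteq> 0 \<and>
     b 0 < cf_a x 1 \<and> (\<forall>l<K. b l \<le> cf_a x (Suc l)) \<and>
     (\<forall>l. 1 \<le> l \<and> l < K \<and> b l = cf_a x (Suc l) \<longrightarrow> b (l - 1) = 0)"

definition S_sum :: "nat \<Rightarrow> (real \<Rightarrow> real) \<Rightarrow> real \<Rightarrow> real" where
  "S_sum M f \<alpha> = (\<Sum>n=1..M. f (real n * \<alpha>)) - real M * integral {0..1} f"

end

theory Submission
  imports Defs "HOL-Real_Asymp.Real_Asymp"
begin

text \<open>
  Put \<open>Q = q\<^sub>K\<^sub>-\<^sub>1\<close>, \<open>a = a\<^sub>K\<close>, \<open>b = b\<^sub>K\<^sub>-\<^sub>1\<close> and write \<open>\<alpha> = P/Q + \<theta>\<close> with the convergent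
  \<open>P/Q\<close>, so that \<open>(-1)\<^sup>K\<^sup>-\<^sup>1 \<theta> > 0\<close> and \<open>|\<theta>| \<le> 1/(Q\<^sup>2 a)\<close>. As \<open>s\<close> divides \<open>Q\<close>, the shift
  \<open>r/s\<close> is a multiple \<open>t/Q\<close> of \<open>1/Q\<close>, and \<open>f\<close> has mean \<open>-1\<close>. Cut \<open>1..bQ\<close> into \<open>b\<close> blocks of
  \<open>Q\<close> consecutive integers. In the \<open>m\<close>-th block \<open>|n\<theta>| \<le> (m+1)/(aQ) < 1/(4Q)\<close>, and
  \<open>n \<mapsto> (nP - t) mod Q\<close> runs through all residues, so the block contributes
  \<open>\<Sum>\<^sub>k ln frac(k/Q + \<epsilon>\<^sub>k) + Q\<close> with tiny \<open>\<epsilon>\<^sub>k\<close> of the sign of \<open>\<theta>\<close>. By Stirling the terms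
  \<open>k \<noteq> 0\<close> give \<open>ln Q / 2 + O(1 + (m+1) ln Q / a)\<close>, and the term \<open>k = 0\<close> decides the sign: for
  \<open>\<theta> > 0\<close> it is at most \<open>ln (1/(4Q))\<close>, which makes the block \<open>\<le> -ln Q / 4\<close>; for \<open>\<theta> < 0\<close> it
  is \<open>ln (1 - \<epsilon>) \<approx> 0\<close> and the block is \<open>\<approx> ln Q / 2\<close>. Summing over the blocks gives
  \<open>(-1)\<^sup>K S \<ge> b ln Q / 8 \<ge> \<delta> a ln Q / 8\<close>.
\<close>


section \<open>Convergents\<close>

lemma cf_rem_not_Rats:
  assumes "x \<notin> \<rat>"
  shows "cf_rem x k \<notin> \<rat>"
proof (induction k)
  case 0
  then show ?case using assms by simp
next
  case (Suc k)
  have "cf_rem x k = frac (cf_rem x k) + of_int \<lfloor>cf_rem x k\<rfloor>" by (simp add: frac_def)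
  then have "frac (cf_rem x k) \<notin> \<rat>" using Suc by (metis Rats_add Rats_of_int)
  then show ?case by (metis Rats_inverse inverse_eq_divide inverse_inverse_eq cf_rem.simps(2))
qed

lemma cf_rem_Suc_gt_1:
  assumes "x \<notin> \<rat>"
  shows "1 < cf_rem x (Suc k)"
proof -
  have "cf_rem x k \<notin> \<int>" using cf_rem_not_Rats[OF assms] Ints_subset_Rats by blast
  then have "0 < frac (cf_rem x k)" "frac (cf_rem x k) < 1" by (auto simp: frac_lt_1)
  then show ?thesis by simp
qed

lemma cf_a_Suc_bounds:
  assumes "x \<notin> \<rat>"
  shows "1 \<le> real (cf_a x (Suc k))" "real (cf_a x (Suc k)) \<le> cf_rem x (Suc k)"
  using cf_rem_Suc_gt_1[OF assms, of k] by (auto simp: cf_a_def)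

lemma cf_rem_Suc_eq:
  assumes "x \<notin> \<rat>"
  shows "cf_rem x (Suc k) = real (cf_a x (Suc k)) + 1 / cf_rem x (Suc (Suc k))"
  using cf_rem_Suc_gt_1[OF assms, of k] by (simp add: cf_a_def frac_def)

declare cf_rem.simps(2) [simp del]

text \<open>\<open>cf_num x k\<close> and \<open>cf_den x k\<close> are \<open>p\<^sub>k\<^sub>-\<^sub>1\<close> and \<open>q\<^sub>k\<^sub>-\<^sub>1\<close>, the numerator and
  denominator of the \<open>(k-1)\<close>-st convergent of \<open>x \<in> (0,1)\<close>; the shift of the index makes room
  for \<open>p\<^sub>-\<^sub>1 = 1\<close> and \<open>q\<^sub>-\<^sub>1 = 0\<close>.\<close>

fun cf_num :: "real \<Rightarrow> nat \<Rightarrow> nat" where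
  "cf_num x 0 = 1"
| "cf_num x (Suc 0) = 0"
| "cf_num x (Suc (Suc k)) = cf_a x (Suc k) * cf_num x (Suc k) + cf_num x k"

fun cf_den :: "real \<Rightarrow> nat \<Rightarrow> nat" where
  "cf_den x 0 = 0"
| "cf_den x (Suc 0) = 1"
| "cf_den x (Suc (Suc k)) = cf_a x (Suc k) * cf_den x (Suc k) + cf_den x k"

lemma cf_q_eq_cf_den: "cf_q x k = cf_den x (Suc k)"
  by (induction x k rule: cf_q.induct) auto

lemma cf_den_Suc_ge_1:
  assumes "x \<notin> \<rat>"
  shows "1 \<le> cf_den x (Suc k)"
proof (induction k)
  case (Suc k)
  have "1 \<le> cf_a x (Suc k)" using cf_a_Suc_bounds(1)[OF assms, of k] by simp
  with Suc have "1 \<le> cf_a x (Suc k) * cf_den x (Suc k)" by simp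
  then show ?case by (metis cf_den.simps(3) trans_le_add1)
qed simp

lemma cf_num_den_det:
  "int (cf_num x (Suc k)) * int (cf_den x k) - int (cf_num x k) * int (cf_den x (Suc k))
     = (-1) ^ Suc k"
  by (induction k) (simp_all add: algebra_simps)

lemma cf_convergent_identity:
  assumes "x \<notin> \<rat>" "0 < x" "x < 1"
  shows "x * (cf_den x (Suc k) * cf_rem x (Suc k) + cf_den x k)
           = cf_num x (Suc k) * cf_rem x (Suc k) + cf_num x k"
proof (induction k)
  case 0
  have "cf_rem x 1 = 1 / x" using assms by (simp add: cf_rem.simps frac_eq)
  then show ?case using assms by simp
next
  case (Suc k)
  define r where "r = cf_rem x (Suc (Suc k))"
  have "0 < r" using cf_rem_Suc_gt_1[OF assms(1), of "Suc k"] unfolding r_def by simp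
  moreover have step: "cf_rem x (Suc k) = cf_a x (Suc k) + 1 / r"
    using cf_rem_Suc_eq[OF assms(1), of k] unfolding r_def .
  ultimately show ?case
    using Suc.IH[unfolded step] unfolding r_def[symmetric] by (simp add: field_simps)
qed

lemma cf_convergent_error:
  fixes x :: real and k :: nat
  assumes "x \<notin> \<rat>" "0 < x" "x < 1"
  defines "Q \<equiv> real (cf_den x (Suc k))"
  defines "D \<equiv> Q * cf_rem x (Suc k) + cf_den x k"
  shows "x - cf_num x (Suc k) / Q = (-1) ^ k / (Q * D)"
proof -
  have "1 \<le> Q" using cf_den_Suc_ge_1[OF assms(1)] unfolding Q_def by simp
  have "1 < cf_rem x (Suc k)" using cf_rem_Suc_gt_1[OF assms(1)] .
  with \<open>1 \<le> Q\<close> have "0 < Q * D"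
    unfolding D_def by (intro mult_pos_pos add_pos_nonneg) auto
  have det: "real (cf_num x (Suc k)) * cf_den x k - real (cf_num x k) * Q = (-1) ^ Suc k"
    using arg_cong[OF cf_num_den_det[of x k], of real_of_int] unfolding Q_def by simp
  have "(x - cf_num x (Suc k) / Q) * (Q * D) = Q * (x * D) - cf_num x (Suc k) * D"
    using \<open>1 \<le> Q\<close> by (simp add: field_simps)
  also have "\<dots> = Q * (cf_num x (Suc k) * cf_rem x (Suc k) + cf_num x k)
      - cf_num x (Suc k) * (Q * cf_rem x (Suc k) + cf_den x k)"
    using cf_convergent_identity[OF assms(1-3), of k] unfolding D_def Q_def by simp
  also have "\<dots> = (-1) ^ k"
    using det by (simp add: algebra_simps)
  finally show ?thesis
    using \<open>0 < Q * D\<close> by (subst eq_divide_eq) auto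
qed

lemma cf_convergent_approx:
  assumes "x \<notin> \<rat>" "0 < x" "x < 1"
  obtains P :: nat where "coprime P (cf_q x k)" "0 < (-1) ^ k * (x - P / cf_q x k)"
    "\<bar>x - P / cf_q x k\<bar> \<le> 1 / (real (cf_q x k) ^ 2 * cf_a x (Suc k))"
proof
  define Q where "Q = real (cf_q x k)"
  define D where "D = Q * cf_rem x (Suc k) + cf_den x k"
  have err: "x - cf_num x (Suc k) / Q = (-1) ^ k / (Q * D)"
    using cf_convergent_error[OF assms, of k] unfolding Q_def D_def cf_q_eq_cf_den .
  have "1 \<le> Q" using cf_den_Suc_ge_1[OF assms(1)] unfolding Q_def cf_q_eq_cf_den by simp
  have a: "1 \<le> real (cf_a x (Suc k))" "real (cf_a x (Suc k)) \<le> cf_rem x (Suc k)"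
    using cf_a_Suc_bounds[OF assms(1)] by auto
  with \<open>1 \<le> Q\<close> have "Q * cf_a x (Suc k) \<le> Q * cf_rem x (Suc k)"
    by (intro mult_left_mono) auto
  then have "Q * cf_a x (Suc k) \<le> D" unfolding D_def by simp
  with \<open>1 \<le> Q\<close> a have QD: "Q ^ 2 * cf_a x (Suc k) \<le> Q * D" "0 < Q ^ 2 * cf_a x (Suc k)"
    by (auto simp: power2_eq_square mult.assoc intro!: mult_left_mono)
  show "0 < (-1) ^ k * (x - cf_num x (Suc k) / cf_q x k)"
    using err QD unfolding Q_def by (simp flip: power_add)
  show "\<bar>x - cf_num x (Suc k) / cf_q x k\<bar> \<le> 1 / (real (cf_q x k) ^ 2 * cf_a x (Suc k))"
  proof -
    have "0 < Q * D" using QD by linarith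
    then have "\<bar>x - cf_num x (Suc k) / Q\<bar> = 1 / (Q * D)" using err by simp
    also have "\<dots> \<le> 1 / (Q ^ 2 * cf_a x (Suc k))"
      using QD by (intro divide_left_mono) auto
    finally show ?thesis unfolding Q_def .
  qed
  show "coprime (cf_num x (Suc k)) (cf_q x k)"
  proof (rule coprimeI)
    fix c assume "c dvd cf_num x (Suc k)" "c dvd cf_q x k"
    then have "int c dvd int (cf_num x (Suc k)) * int (cf_den x k)
        - int (cf_num x k) * int (cf_den x (Suc k))"
      unfolding cf_q_eq_cf_den by simp
    then have "is_unit (int c)"
      unfolding cf_num_den_det by (rule dvd_unit_imp_unit) simp
    then show "is_unit c" by simp
  qed
qed

section \<open>The mean of \<open>ln (frac (x - c))\<close>\<close>

lemma continuous_on_x_ln_x: "continuous_on {0..} (\<lambda>y::real. y * ln y)"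
proof -
  have "continuous (at y within {0..}) (\<lambda>y::real. y * ln y)" if "0 \<le> y" for y
  proof (cases "y = 0")
    case True
    have "((\<lambda>y::real. y * ln y) \<longlongrightarrow> 0) (at_right 0)" by real_asymp
    then show ?thesis
      using True by (simp add: continuous_within at_within_Ici_at_right)
  next
    case False
    with that have "isCont (\<lambda>y::real. y * ln y) y" by (intro continuous_intros) auto
    then show ?thesis by (rule continuous_at_imp_continuous_within)
  qed
  then show ?thesis by (simp add: continuous_on_eq_continuous_within)
qed

lemma has_integral_ln_shift:
  fixes d u v :: real
  assumes "d \<le> u" "u \<le> v" and f: "\<And>x. x \<in> {u<..<v} \<Longrightarrow> f x = ln (x - d)"
  shows "(f has_integral ((v - d) * ln (v - d) - (u - d) * ln (u - d) - (v - u))) {u..v}"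
proof -
  let ?F = "\<lambda>x. (x - d) * ln (x - d) - (x - d)"
  have "(f has_integral (?F v - ?F u)) {u..v}"
  proof (rule fundamental_theorem_of_calculus_interior)
    show "continuous_on {u..v} ?F"
      using assms(1) by (intro continuous_intros continuous_on_compose2[OF continuous_on_x_ln_x]) auto
    fix x assume x: "x \<in> {u<..<v}"
    then have "(?F has_real_derivative ln (x - d)) (at x)"
      using assms(1) by (auto intro!: derivative_eq_intros)
    then show "(?F has_vector_derivative f x) (at x)"
      using f[OF x] by (simp add: has_real_derivative_iff_has_vector_derivative)
  qed (rule assms(2))
  then show ?thesis by (simp add: algebra_simps)
qed

lemma integral_ln_frac_shift:
  fixes c :: real
  assumes "0 \<le> c" "c < 1"
  shows "integral {0..1} (\<lambda>x. ln (frac (x - c))) = -1"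
proof -
  let ?f = "\<lambda>x. ln (frac (x - c))"
  have "(?f has_integral (1 * ln 1 - (1 - c) * ln (1 - c) - c)) {0..c}"
  proof -
    have "frac (x - c) = x - (c - 1)" if "x \<in> {0<..<c}" for x
      using that frac_1_eq[of "x - c"] assms by (simp add: frac_eq)
    then show ?thesis
      using has_integral_ln_shift[of "c - 1" 0 c ?f] assms by simp
  qed
  moreover have "(?f has_integral ((1 - c) * ln (1 - c) - 0 * ln 0 - (1 - c))) {c..1}"
    using has_integral_ln_shift[of c c 1 ?f] assms by (simp add: frac_eq)
  ultimately have "(?f has_integral -1) {0..1}"
    using has_integral_combine[of 0 c 1] assms by fastforce
  then show ?thesis by (rule integral_unique)
qed

section \<open>Stirling-type bounds\<close>

lemma ln_Suc_diff_bounds: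
  fixes x :: real
  assumes "0 < x"
  shows "1 \<le> (x + 1/2) * (ln (x + 1) - ln x)"
    "(x + 1/2) * (ln (x + 1) - ln x) \<le> 1 + 1 / (4 * x) - 1 / (4 * (x + 1))"
proof -
  have "2 / (2 * x + 1) \<le> ln (x + 1) - ln x"
    using ln_inverse_approx_ge[of x "x + 1"] assms by simp
  then show "1 \<le> (x + 1/2) * (ln (x + 1) - ln x)" using assms by (simp add: field_simps)
  have "ln (x + 1) - ln x \<le> (1 / x + 1 / (x + 1)) / 2"
    using ln_inverse_approx_le[of x 1] assms by (simp add: inverse_eq_divide)
  then have "(x + 1/2) * (ln (x + 1) - ln x) \<le> (x + 1/2) * ((1 / x + 1 / (x + 1)) / 2)"
    using assms by (intro mult_left_mono) auto
  also have "\<dots> = 1 + 1 / (4 * x) - 1 / (4 * (x + 1))"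
    using assms by (simp add: divide_simps) (simp add: algebra_simps)
  finally show "(x + 1/2) * (ln (x + 1) - ln x) \<le> 1 + 1 / (4 * x) - 1 / (4 * (x + 1))" .
qed

lemma ln_fact_Stirling_bounds:
  assumes "1 \<le> n"
  shows "3/4 \<le> ln (fact n) - (real n + 1/2) * ln n + n"
    "ln (fact n) - (real n + 1/2) * ln n + n \<le> 1"
proof -
  define d where "d n = ln (fact n) - (real n + 1/2) * ln n + n" for n :: nat
  have "3/4 + 1 / (4 * real n) \<le> d n \<and> d n \<le> 1"
    using assms
  proof (induction n rule: dec_induct)
    case base
    then show ?case by (simp add: d_def)
  next
    case (step n)
    then have "0 < real n" by simp
    have "ln (fact (Suc n)) = ln (real n + 1) + ln (fact n)"
      using ln_mult[of "real n + 1" "fact n"] by (simp add: add.commute)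
    then have "d (Suc n) = d n + 1 - (real n + 1/2) * (ln (real n + 1) - ln n)"
      by (simp add: d_def algebra_simps)
    then show ?case
      using step.IH ln_Suc_diff_bounds[OF \<open>0 < real n\<close>] by (simp add: add.commute)
  qed
  moreover have "0 \<le> 1 / (4 * real n)" by simp
  ultimately show "3/4 \<le> ln (fact n) - (real n + 1/2) * ln n + n"
    "ln (fact n) - (real n + 1/2) * ln n + n \<le> 1"
    unfolding d_def by linarith+
qed

lemma sum_ln_div_bounds:
  assumes "1 \<le> Q"
  shows "ln Q / 2 + 3/4 \<le> (\<Sum>k=1..<Q. ln (real k / real Q)) + Q"
    "(\<Sum>k=1..<Q. ln (real k / real Q)) + Q \<le> ln Q / 2 + 1"
proof -
  have "(\<Sum>k=1..<Q. ln (real k / real Q)) = (\<Sum>k=1..<Suc Q. ln (real k / real Q))"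
    using assms by (simp add: sum.atLeastLessThan_Suc)
  also have "\<dots> = (\<Sum>k=1..Q. ln k - ln Q)"
    using assms by (intro sum.cong) (auto simp: ln_div atLeastLessThanSuc_atLeastAtMost)
  also have "\<dots> = ln (fact Q) - Q * ln Q"
    by (simp add: sum_subtractf fact_prod) (subst ln_prod; auto)
  finally show "ln Q / 2 + 3/4 \<le> (\<Sum>k=1..<Q. ln (real k / real Q)) + Q"
    "(\<Sum>k=1..<Q. ln (real k / real Q)) + Q \<le> ln Q / 2 + 1"
    using ln_fact_Stirling_bounds[OF assms] by (simp_all add: algebra_simps)
qed

lemma sum_inverse_le_1_plus_ln:
  assumes "1 \<le> n"
  shows "(\<Sum>k=1..<n. 1 / real k) \<le> 1 + ln n"
proof -
  have "(\<Sum>k=1..<n. 1 / real k) \<le> (\<Sum>k=1..n. 1 / real k)"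
    by (intro sum_mono2) auto
  also have "\<dots> = harm n"
    unfolding harm_def by (simp add: inverse_eq_divide)
  also have "harm n \<le> 1 + ln n"
    using euler_mascheroni_sequence_decreasing[of 1 n] assms by (simp add: harm_def)
  finally show ?thesis .
qed

section \<open>Sums of \<open>ln frac\<close> along \<open>n \<alpha>\<close>\<close>

lemma frac_of_int_div_add_mod:
  fixes A Q :: int and y :: real
  shows "frac (A / Q + y) = frac ((A mod Q) / Q + y)"
  by (simp add: of_int_div_aux[of A Q] add.assoc)

lemma frac_mult_add_eq_residue:
  fixes P Q n :: nat and t :: int and \<theta> :: real
  assumes "0 < Q"
  shows "frac (n * (P / Q + \<theta>) - t / Q) = frac (nat ((n * P - t) mod Q) / Q + n * \<theta>)"
proof -
  have "n * (P / Q + \<theta>) - t / Q = of_int (n * P - t) / of_int Q + n * \<theta>"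
    using assms by (simp add: field_simps)
  moreover have "real (nat ((n * P - t) mod Q)) = of_int ((n * P - t) mod Q)"
    using assms by simp
  ultimately show ?thesis
    using frac_of_int_div_add_mod[of _ Q] by simp
qed

lemma bij_betw_mult_diff_mod:
  fixes P Q u :: nat and t :: int
  assumes "coprime P Q" "0 < Q"
  shows "bij_betw (\<lambda>n. nat ((n * P - t) mod Q)) {u+1..u+Q} {0..<Q}"
proof -
  let ?f = "\<lambda>n. nat ((n * P - t) mod Q)"
  have "inj_on ?f {u+1..u+Q}"
  proof (rule inj_onI)
    fix i j assume ij: "i \<in> {u+1..u+Q}" "j \<in> {u+1..u+Q}" and "?f i = ?f j"
    then have "(i * P - t) mod Q = (j * P - t) mod Q"
      using assms(2) by (simp add: nat_eq_iff)
    then have "int Q dvd (int i - int j) * int P"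
      by (simp add: mod_eq_dvd_iff algebra_simps)
    then have dvd: "int Q dvd int i - int j"
      using assms(1) by (simp add: coprime_dvd_mult_left_iff coprime_commute)
    show "i = j"
    proof (rule ccontr)
      assume "i \<noteq> j"
      then have "int Q \<le> \<bar>int i - int j\<bar>" using dvd_imp_le_int[OF _ dvd] by simp
      moreover have "\<bar>int i - int j\<bar> < int Q" using ij by (simp add: abs_less_iff)
      ultimately show False by simp
    qed
  qed
  moreover have "?f ` {u+1..u+Q} \<subseteq> {0..<Q}"
    using assms(2) by (auto simp: nat_less_iff)
  moreover have "card (?f ` {u+1..u+Q}) = card {0..<Q}"
    using card_image[OF \<open>inj_on ?f {u+1..u+Q}\<close>] by simp
  ultimately show ?thesis
    unfolding bij_betw_def using card_subset_eq[of "{0..<Q}"] by blast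
qed

lemma sum_mult_diff_mod_reindex:
  fixes P Q u :: nat and t :: int and h :: "nat \<Rightarrow> real"
  assumes "coprime P Q" "0 < Q"
  shows "(\<Sum>n=u+1..u+Q. h (nat ((n * P - t) mod Q))) = h 0 + (\<Sum>k=1..<Q. h k)"
proof -
  have "(\<Sum>n=u+1..u+Q. h (nat ((n * P - t) mod Q))) = (\<Sum>k=0..<Q. h k)"
    by (rule sum.reindex_bij_betw[OF bij_betw_mult_diff_mod[OF assms]])
  also have "\<dots> = h 0 + (\<Sum>k=1..<Q. h k)"
    using assms(2) by (simp add: sum.atLeast_Suc_lessThan)
  finally show ?thesis .
qed

lemma sum_atLeastAtMost_mult_blocks:
  fixes g :: "nat \<Rightarrow> real"
  shows "(\<Sum>n=1..b*Q. g n) = (\<Sum>m<b. \<Sum>n=m*Q+1..m*Q+Q. g n)"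
proof (induction b)
  case (Suc b)
  have "(\<Sum>n=1..b*Q+Q. g n) = (\<Sum>n=1..b*Q. g n) + (\<Sum>n=b*Q+1..b*Q+Q. g n)"
    by (rule sum.ub_add_nat) simp
  with Suc show ?case by (simp add: add.commute)
qed simp

lemma ln_frac_above_grid_point_le:
  fixes k Q :: nat and x w :: real
  assumes "k < Q" "0 < x" "x \<le> w" "w * Q < 1"
  shows "ln (frac (k / Q + x))
    \<le> (if k = 0 then ln w else ln (k / Q) + w * Q / k)"
proof -
  have "0 < real Q" using assms(1) by simp
  have "k / Q + x < 1"
  proof -
    have "real k / Q \<le> 1 - 1 / Q"
      using assms(1) \<open>0 < real Q\<close> by (simp add: field_simps)
    moreover have "w < 1 / Q" using assms(4) \<open>0 < real Q\<close> by (simp add: field_simps)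
    ultimately show ?thesis using assms(3) by linarith
  qed
  then have frac: "frac (k / Q + x) = k / Q + x" using assms(2) by (simp add: frac_eq)
  show ?thesis
  proof (cases "k = 0")
    case True
    then show ?thesis using frac assms(2,3) by simp
  next
    case False
    then have "0 < real k / Q" using \<open>0 < real Q\<close> by simp
    have "ln (k / Q + x) \<le> ln (k / Q + w)" using \<open>0 < real k / Q\<close> assms(2,3) by simp
    also have "k / Q + w = (k / Q) * (1 + w * Q / k)"
      using False \<open>0 < real Q\<close> by (simp add: field_simps)
    also have "ln \<dots> = ln (k / Q) + ln (1 + w * Q / k)"
    proof (rule ln_mult_pos[OF \<open>0 < real k / Q\<close>])
      show "0 < 1 + w * Q / k" using assms(2,3) by (simp add: add_pos_nonneg)
    qed
    also have "ln (1 + w * Q / k) \<le> w * Q / k"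
      using assms(2,3) by (intro ln_add_one_self_le_self) auto
    finally show ?thesis using frac False by simp
  qed
qed

lemma ln_frac_below_grid_point_ge:
  fixes k Q :: nat and x w :: real
  assumes "k < Q" "x < 0" "-w \<le> x" "4 * w * Q \<le> 1"
  shows "(if k = 0 then -2 * w else ln (k / Q) - 2 * (w * Q / k))
    \<le> ln (frac (k / Q + x))"
proof -
  have "1 \<le> real Q" using assms(1) by simp
  have "0 < w" using assms(2,3) by simp
  have "w * Q \<le> 1/4" using assms(4) by simp
  moreover have "w * 1 \<le> w * Q" using \<open>1 \<le> real Q\<close> \<open>0 < w\<close> by (intro mult_left_mono) auto
  ultimately have "w \<le> 1/4" by simp
  have ln_ge: "-2 * y \<le> ln (1 - y)" if "0 \<le> y" "y \<le> 1/2" for y :: real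
  proof -
    have "y * (2 * y) \<le> y * 1" using that by (intro mult_left_mono) auto
    then show ?thesis using ln_one_minus_pos_lower_bound[OF that] by (simp add: power2_eq_square)
  qed
  show ?thesis
  proof (cases "k = 0")
    case True
    have "frac x = 1 + x"
      using frac_1_eq[of x] assms(2,3) \<open>w \<le> 1/4\<close> by (simp add: frac_eq add.commute)
    moreover have "ln (1 - w) \<le> ln (1 + x)" using assms(3) \<open>w \<le> 1/4\<close> by simp
    ultimately show ?thesis using True ln_ge[of w] \<open>0 < w\<close> \<open>w \<le> 1/4\<close> by simp
  next
    case False
    define y where "y = w * Q / k"
    have "0 \<le> y" using \<open>0 < w\<close> unfolding y_def by simp
    have "1 \<le> real k" using False by simp
    then have "y \<le> w * Q"
      unfolding y_def using \<open>0 < w\<close> by (simp add: divide_le_eq mult_le_cancel_left1 mult.commute)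
    then have "y \<le> 1/4" using assms(4) by simp
    have eq: "k / Q - w = (k / Q) * (1 - y)"
      using False \<open>1 \<le> real Q\<close> unfolding y_def by (simp add: field_simps)
    have "0 < real k / Q" using False \<open>1 \<le> real Q\<close> by simp
    then have pos: "0 < k / Q - w"
      unfolding eq using \<open>y \<le> 1/4\<close> by (intro mult_pos_pos) auto
    have "real k / Q < 1" using assms(1) by simp
    then have "k / Q + x < 1" using assms(2) by linarith
    then have frac: "frac (k / Q + x) = k / Q + x" using pos assms(3) by (simp add: frac_eq)
    have "ln (k / Q - w) = ln (k / Q) + ln (1 - y)"
      unfolding eq using \<open>0 < real k / Q\<close> \<open>y \<le> 1/4\<close> by (intro ln_mult_pos) auto
    moreover have "-2 * y \<le> ln (1 - y)" using \<open>0 \<le> y\<close> \<open>y \<le> 1/4\<close> by (intro ln_ge) auto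
    moreover have "ln (k / Q - w) \<le> ln (k / Q + x)" using pos assms(3) by simp
    ultimately have "ln (k / Q) - 2 * y \<le> ln (frac (k / Q + x))" unfolding frac by linarith
    then show ?thesis unfolding if_not_P[OF False] y_def .
  qed
qed

lemma block_sum_ln_frac_le:
  fixes P Q u :: nat and t :: int and \<theta> w :: real
  assumes "coprime P Q" "0 < Q" "0 < \<theta>" "(u + Q) * \<theta> \<le> w" "w * Q < 1"
  shows "(\<Sum>n=u+1..u+Q. ln (frac (n * (P / Q + \<theta>) - t / Q))) + Q
    \<le> ln w + ln Q / 2 + 1 + w * Q * (1 + ln Q)"
proof -
  define h where "h k = (if k = 0 then ln w else ln (k / Q) + w * Q / k)" for k :: nat
  have "(\<Sum>n=u+1..u+Q. ln (frac (n * (P / Q + \<theta>) - t / Q)))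
      \<le> (\<Sum>n=u+1..u+Q. h (nat ((n * P - t) mod Q)))"
  proof (rule sum_mono)
    fix n assume "n \<in> {u+1..u+Q}"
    then have "0 < n * \<theta>" "n * \<theta> \<le> (u + Q) * \<theta>"
      using assms(3) by (auto intro: mult_right_mono)
    moreover have "nat ((n * P - t) mod Q) < Q" using assms(2) by (simp add: nat_less_iff)
    ultimately show "ln (frac (n * (P / Q + \<theta>) - t / Q)) \<le> h (nat ((n * P - t) mod Q))"
      unfolding frac_mult_add_eq_residue[OF assms(2)] h_def
      using assms(4) by (intro ln_frac_above_grid_point_le assms(5)) auto
  qed
  also have "\<dots> = h 0 + (\<Sum>k=1..<Q. h k)"
    by (rule sum_mult_diff_mod_reindex[OF assms(1,2)])
  also have "\<dots> = ln w + (\<Sum>k=1..<Q. ln (k / Q)) + w * Q * (\<Sum>k=1..<Q. 1 / k)"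
    by (simp add: h_def sum.distrib sum_distrib_left)
  also have "\<dots> \<le> ln w + (ln Q / 2 + 1 - Q) + w * Q * (1 + ln Q)"
  proof -
    have "0 \<le> (u + Q) * \<theta>" using assms(3) by simp
    then have "0 \<le> w" using assms(4) by linarith
    then have "w * Q * (\<Sum>k=1..<Q. 1 / k) \<le> w * Q * (1 + ln Q)"
      using sum_inverse_le_1_plus_ln[of Q] assms(2) by (intro mult_left_mono) auto
    then show ?thesis using sum_ln_div_bounds(2)[of Q] assms(2) by simp
  qed
  finally show ?thesis by simp
qed

lemma block_sum_ln_frac_ge:
  fixes P Q u :: nat and t :: int and \<theta> w :: real
  assumes "coprime P Q" "0 < Q" "\<theta> < 0" "(u + Q) * \<bar>\<theta>\<bar> \<le> w" "4 * w * Q \<le> 1"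
  shows "ln Q / 2 + 3/4 - 2 * w * Q * (2 + ln Q)
    \<le> (\<Sum>n=u+1..u+Q. ln (frac (n * (P / Q + \<theta>) - t / Q))) + Q"
proof -
  define h where "h k = (if k = 0 then -2 * w else ln (k / Q) - 2 * (w * Q / k))" for k :: nat
  have "0 < (u + Q) * \<bar>\<theta>\<bar>" using assms(2,3) by (intro mult_pos_pos) auto
  then have "0 < w" using assms(4) by linarith
  have "ln Q / 2 + 3/4 - 2 * w * Q * (2 + ln Q)
      \<le> -2 * w + (ln Q / 2 + 3/4 - Q) - 2 * (w * Q) * (1 + ln Q) + Q"
  proof -
    have "w * 1 \<le> w * Q" using \<open>0 < w\<close> assms(2) by (intro mult_left_mono) auto
    then show ?thesis by (simp add: algebra_simps)
  qed
  also have "\<dots> \<le> -2 * w + (\<Sum>k=1..<Q. ln (k / Q)) - 2 * (w * Q) * (\<Sum>k=1..<Q. 1 / k) + Q"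
  proof -
    have "2 * (w * Q) * (\<Sum>k=1..<Q. 1 / k) \<le> 2 * (w * Q) * (1 + ln Q)"
      using sum_inverse_le_1_plus_ln[of Q] assms(2) \<open>0 < w\<close> by (intro mult_left_mono) auto
    then show ?thesis using sum_ln_div_bounds(1)[of Q] assms(2) by simp
  qed
  also have "\<dots> = h 0 + (\<Sum>k=1..<Q. h k) + Q"
    by (simp add: h_def sum_subtractf sum_distrib_left)
  also have "h 0 + (\<Sum>k=1..<Q. h k) = (\<Sum>n=u+1..u+Q. h (nat ((n * P - t) mod Q)))"
    by (rule sum_mult_diff_mod_reindex[OF assms(1,2), symmetric])
  also have "\<dots> \<le> (\<Sum>n=u+1..u+Q. ln (frac (n * (P / Q + \<theta>) - t / Q)))"
  proof (rule sum_mono)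
    fix n assume n: "n \<in> {u+1..u+Q}"
    then have "n * \<theta> < 0" using assms(3) by (simp add: mult_pos_neg)
    have "n * \<bar>\<theta>\<bar> \<le> (u + Q) * \<bar>\<theta>\<bar>" using n by (intro mult_right_mono) auto
    moreover have "n * \<bar>\<theta>\<bar> = - (n * \<theta>)" using assms(3) by simp
    ultimately have "-w \<le> n * \<theta>" using assms(4) by linarith
    moreover have "nat ((n * P - t) mod Q) < Q" using assms(2) by (simp add: nat_less_iff)
    ultimately show "h (nat ((n * P - t) mod Q)) \<le> ln (frac (n * (P / Q + \<theta>) - t / Q))"
      unfolding frac_mult_add_eq_residue[OF assms(2)] h_def
      using \<open>n * \<theta> < 0\<close> by (intro ln_frac_below_grid_point_ge assms(5)) auto
  qed
  finally show ?thesis by simp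
qed

lemma ln_4_ge: "5/4 \<le> ln (4::real)"
proof -
  have "ln (4::real) = 2 * ln 2" using ln_realpow[of 2 2] by simp
  then show ?thesis using ln2_ge_two_thirds by simp
qed

lemma sum_ln_frac_le:
  fixes P Q b :: nat and t :: int and \<theta> a :: real
  assumes "coprime P Q" "0 < Q" "0 < \<theta>" "\<theta> \<le> 1 / (real Q ^ 2 * a)" "b < a / 4"
  shows "(\<Sum>n=1..b*Q. ln (frac (n * (P / Q + \<theta>) - t / Q))) + b * Q \<le> -(1/4) * b * ln Q"
proof -
  let ?g = "\<lambda>n. ln (frac (n * (P / Q + \<theta>) - t / Q))"
  have "0 < a" using assms(5) by linarith
  have block: "(\<Sum>n=m*Q+1..m*Q+Q. ?g n) + Q \<le> -(1/4) * ln Q" if "m < b" for m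
  proof -
    define w where "w = (m + 1) / (a * Q)"
    have wQ: "w * Q = (m + 1) / a" unfolding w_def using assms(2) by simp
    have "real (m + 1) \<le> b" using that by simp
    then have "(m + 1) / a < 1/4" using assms(5) \<open>0 < a\<close> by (simp add: field_simps)
    have "(m * Q + Q) * \<theta> = ((m + 1) * Q) * \<theta>" by (simp add: algebra_simps)
    also have "\<dots> \<le> ((m + 1) * Q) * (1 / (real Q ^ 2 * a))"
      using assms(4) by (intro mult_left_mono) auto
    also have "\<dots> = w" unfolding w_def using assms(2) \<open>0 < a\<close> by (simp add: power2_eq_square field_simps)
    finally have "(m * Q + Q) * \<theta> \<le> w" .
    moreover have "w * Q < 1" using wQ \<open>(m + 1) / a < 1/4\<close> by linarith
    ultimately have "(\<Sum>n=m*Q+1..m*Q+Q. ?g n) + Q \<le> ln w + ln Q / 2 + 1 + w * Q * (1 + ln Q)"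
      by (intro block_sum_ln_frac_le assms(1-3)) auto
    moreover have "ln w = ln ((m + 1) / a) - ln Q"
      unfolding w_def using \<open>0 < a\<close> assms(2) by (simp add: ln_div ln_mult_pos)
    moreover have "ln ((m + 1) / a) \<le> ln (1/4)"
      using \<open>(m + 1) / a < 1/4\<close> \<open>0 < a\<close> by simp
    moreover have "w * Q * (1 + ln Q) \<le> 1/4 * (1 + ln Q)"
      using \<open>(m + 1) / a < 1/4\<close> wQ assms(2) by (intro mult_right_mono) auto
    ultimately show ?thesis using ln_4_ge by (simp add: ln_div)
  qed
  have "(\<Sum>n=1..b*Q. ?g n) + b * Q = (\<Sum>m<b. (\<Sum>n=m*Q+1..m*Q+Q. ?g n) + Q)"
    unfolding sum_atLeastAtMost_mult_blocks[of ?g] by (simp add: sum.distrib)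
  also have "\<dots> \<le> (\<Sum>m<b. -(1/4) * ln Q)" by (intro sum_mono block) simp
  finally show ?thesis by simp
qed

lemma sum_ln_frac_ge:
  fixes P Q b :: nat and t :: int and \<theta> a :: real
  assumes "coprime P Q" "0 < Q" "\<theta> < 0" "\<bar>\<theta>\<bar> \<le> 1 / (real Q ^ 2 * a)" "8 \<le> a" "b < a / 4"
  shows "1/8 * b * ln Q \<le> (\<Sum>n=1..b*Q. ln (frac (n * (P / Q + \<theta>) - t / Q))) + b * Q"
proof -
  let ?g = "\<lambda>n. ln (frac (n * (P / Q + \<theta>) - t / Q))"
  let ?c = "2 / a * (2 + ln Q)"
  have "0 < a" using assms(5) by simp
  have block: "ln Q / 2 + 3/4 - ?c * real (m + 1) \<le> (\<Sum>n=m*Q+1..m*Q+Q. ?g n) + Q"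
    if "m < b" for m
  proof -
    define w where "w = (m + 1) / (a * Q)"
    have wQ: "w * Q = (m + 1) / a" unfolding w_def using assms(2) by simp
    have "real (m + 1) \<le> b" using that by simp
    then have "4 * (w * Q) \<le> 1" unfolding wQ using assms(5,6) by (simp add: field_simps)
    have "(m * Q + Q) * \<bar>\<theta>\<bar> = ((m + 1) * Q) * \<bar>\<theta>\<bar>" by (simp add: algebra_simps)
    also have "\<dots> \<le> ((m + 1) * Q) * (1 / (real Q ^ 2 * a))"
      using assms(4) by (intro mult_left_mono) auto
    also have "\<dots> = w" unfolding w_def using assms(2) \<open>0 < a\<close> by (simp add: power2_eq_square field_simps)
    finally have "(m * Q + Q) * \<bar>\<theta>\<bar> \<le> w" .
    then have "ln Q / 2 + 3/4 - 2 * w * Q * (2 + ln Q) \<le> (\<Sum>n=m*Q+1..m*Q+Q. ?g n) + Q"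
      using \<open>4 * (w * Q) \<le> 1\<close> by (intro block_sum_ln_frac_ge assms(1-3)) (auto simp: mult.assoc)
    moreover have "2 * w * Q * (2 + ln Q) = 2 * (w * Q) * (2 + ln Q)" by simp
    then have "2 * w * Q * (2 + ln Q) = ?c * real (m + 1)"
      unfolding wQ by (simp add: add_divide_distrib algebra_simps)
    ultimately show ?thesis by linarith
  qed
  have gauss: "(\<Sum>m<b. real (m + 1)) = b * (b + 1) / 2"
    by (induction b) (simp_all add: field_simps)
  have "?c * (\<Sum>m<b. real (m + 1)) = b * ((b + 1) / a) * (2 + ln Q)"
    unfolding gauss using \<open>0 < a\<close> by (simp add: field_simps)
  moreover have "b * ((b + 1) / a) * (2 + ln Q) \<le> b * (3/8) * (2 + ln Q)"
  proof -
    have "(b + 1) / a \<le> 3/8" using assms(5,6) by (simp add: field_simps)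
    then show ?thesis using assms(2) by (intro mult_right_mono mult_left_mono) auto
  qed
  moreover have "b * (ln Q / 2 + 3/4) - b * (3/8) * (2 + ln Q) = 1/8 * b * ln Q"
    by (simp add: algebra_simps)
  ultimately have "1/8 * b * ln Q \<le> b * (ln Q / 2 + 3/4) - ?c * (\<Sum>m<b. real (m + 1))"
    by linarith
  also have "\<dots> = (\<Sum>m<b. ln Q / 2 + 3/4 - ?c * real (m + 1))"
    by (simp add: sum_subtractf sum_distrib_left)
  also have "\<dots> \<le> (\<Sum>m<b. (\<Sum>n=m*Q+1..m*Q+Q. ?g n) + Q)" by (intro sum_mono block) simp
  also have "\<dots> = (\<Sum>n=1..b*Q. ?g n) + b * Q"
    unfolding sum_atLeastAtMost_mult_blocks[of ?g] by (simp add: sum.distrib)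
  finally show ?thesis .
qed

lemma S_sum_ln_frac_eq_sum:
  fixes Q r s M :: nat and x :: real
  assumes "r < s" "s dvd Q" "0 < Q"
  shows "S_sum M (\<lambda>y. ln (frac (y - r / s))) x
    = (\<Sum>n=1..M. ln (frac (n * x - int (r * (Q div s)) / Q))) + M"
proof -
  have "real Q = s * (Q div s)" using assms(2) by simp
  moreover have "0 < Q div s" using assms(2,3) by (auto elim!: dvdE)
  ultimately have "real (r * (Q div s)) / Q = r / s" by simp
  moreover have "integral {0..1} (\<lambda>y. ln (frac (y - r / s))) = -1"
    using assms(1) by (intro integral_ln_frac_shift) auto
  ultimately show ?thesis unfolding S_sum_def by simp
qed

lemma S_sum_ln_frac_convergent_denominator:
  fixes x :: real and r s k b :: nat
  assumes "x \<notin> \<rat>" "0 < x" "x < 1" "r < s" "s dvd cf_q x k"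
    and "8 \<le> cf_a x (Suc k)" "b < cf_a x (Suc k) / 4"
  shows "1/8 * b * ln (cf_q x k)
    \<le> (-1) ^ Suc k * S_sum (b * cf_q x k) (\<lambda>y. ln (frac (y - r / s))) x"
proof -
  define Q where "Q = cf_q x k"
  define a where "a = real (cf_a x (Suc k))"
  obtain P where P: "coprime P Q" "0 < (-1) ^ k * (x - P / Q)" "\<bar>x - P / Q\<bar> \<le> 1 / (real Q ^ 2 * a)"
    using cf_convergent_approx[OF assms(1-3), of k] unfolding Q_def a_def by blast
  define \<theta> where "\<theta> = x - P / Q"
  have \<theta>: "0 < (-1) ^ k * \<theta>" "\<bar>\<theta>\<bar> \<le> 1 / (real Q ^ 2 * a)"
    using P(2,3) unfolding \<theta>_def .
  define t where "t = int (r * (Q div s))"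
  have "0 < Q" using cf_den_Suc_ge_1[OF assms(1), of k] unfolding Q_def cf_q_eq_cf_den by simp
  have "P / Q + \<theta> = x" unfolding \<theta>_def by simp
  then have S: "S_sum (b * Q) (\<lambda>y. ln (frac (y - r / s))) x
      = (\<Sum>n=1..b*Q. ln (frac (n * (P / Q + \<theta>) - t / Q))) + b * Q"
    unfolding t_def using S_sum_ln_frac_eq_sum[OF assms(4) assms(5)[folded Q_def] \<open>0 < Q\<close>] by simp
  have b: "b < a / 4" using assms(7) unfolding a_def .
  show ?thesis
  proof (cases "even k")
    case True
    then have "0 < \<theta>" using \<theta>(1) by simp
    have "(\<Sum>n=1..b*Q. ln (frac (n * (P / Q + \<theta>) - t / Q))) + b * Q \<le> -(1/4) * b * ln Q"
      using \<theta>(2) by (intro sum_ln_frac_le[OF P(1) \<open>0 < Q\<close> \<open>0 < \<theta>\<close> _ b]) simp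
    moreover have "1/8 * b * ln Q \<le> 1/4 * b * ln Q"
      using \<open>0 < Q\<close> by (intro mult_right_mono) auto
    moreover have "(-1::real) ^ Suc k = -1" using True by simp
    ultimately show ?thesis unfolding Q_def[symmetric] S by simp
  next
    case False
    then have "\<theta> < 0" using \<theta>(1) by simp
    have "1/8 * b * ln Q \<le> (\<Sum>n=1..b*Q. ln (frac (n * (P / Q + \<theta>) - t / Q))) + b * Q"
      using assms(6) by (intro sum_ln_frac_ge[OF P(1) \<open>0 < Q\<close> \<open>\<theta> < 0\<close> \<theta>(2) _ b]) (simp add: a_def)
    moreover have "(-1::real) ^ Suc k = 1" using False by simp
    ultimately show ?thesis unfolding Q_def[symmetric] S by simp
  qed
qed

theorem lemma4p4:
  "\<exists>C>0. \<forall>\<delta>::real. \<delta> > 0 \<longrightarrow>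
     (\<forall>r s :: nat. 0 < s \<and> r < s \<and> coprime r s \<longrightarrow>
       (\<exists>A::real. \<forall>(\<alpha>::real) (K::nat) (N::nat) (b::nat \<Rightarrow> nat).
          \<alpha> \<notin> \<rat> \<and> 0 < \<alpha> \<and> \<alpha> < 1 \<and> 1 \<le> K \<and>
          cf_q \<alpha> (K - 1) mod s = 0 \<and>
          cf_q \<alpha> (K - 1) < N \<and> N < cf_q \<alpha> K \<and>
          is_ostrowski \<alpha> K b N \<and>
          \<delta> * real (cf_a \<alpha> K) < real (b (K - 1)) \<and>
          real (b (K - 1)) < real (cf_a \<alpha> K) / 4 \<and>
          real (cf_a \<alpha> K) \<ge> A
          \<longrightarrow>
          (-1) ^ K * S_sum (b (K - 1) * cf_q \<alpha> (K - 1))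
                      (\<lambda>x. ln (frac (x - real r / real s))) \<alpha>
            \<ge> C * \<delta> * real (cf_a \<alpha> K) * ln (real (cf_q \<alpha> (K - 1)))))"
proof -
  have key: "1/8 * \<delta> * cf_a \<alpha> K * ln (cf_q \<alpha> (K - 1))
      \<le> (-1) ^ K * S_sum (b (K - 1) * cf_q \<alpha> (K - 1)) (\<lambda>x. ln (frac (x - r / s))) \<alpha>"
    if "r < s" "\<alpha> \<notin> \<rat>" "0 < \<alpha>" "\<alpha> < 1" "1 \<le> K" "cf_q \<alpha> (K - 1) mod s = 0"
      "\<delta> * cf_a \<alpha> K < b (K - 1)" "b (K - 1) < cf_a \<alpha> K / 4" "8 \<le> real (cf_a \<alpha> K)"
    for \<delta> :: real and r s :: nat and \<alpha> K b
  proof -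
    obtain k where K: "K = Suc k" using \<open>1 \<le> K\<close> by (cases K) auto
    have "1 \<le> cf_q \<alpha> k" using cf_den_Suc_ge_1[OF that(2)] by (simp add: cf_q_eq_cf_den)
    then have "1/8 * \<delta> * cf_a \<alpha> (Suc k) * ln (cf_q \<alpha> k) \<le> 1/8 * b k * ln (cf_q \<alpha> k)"
      using that(7) K by (intro mult_right_mono) auto
    also have "\<dots> \<le> (-1) ^ Suc k * S_sum (b k * cf_q \<alpha> k) (\<lambda>x. ln (frac (x - r / s))) \<alpha>"
      using that K by (intro S_sum_ln_frac_convergent_denominator) (auto simp: dvd_eq_mod_eq_0)
    finally show ?thesis using K by simp
  qed
  show ?thesis
    apply (rule exI[of _ "1/8"], intro conjI allI impI)
     apply simp
    apply (intro exI[of _ 8] allI impI, elim conjE)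
    by (rule key)
qed

end
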